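(* Let $T=\{0,\dots,N\}$ and $\mathbb{F}$ a field. Let $C_\bullet$, $C'_\bullet$ be filtrations of finite-dimensional chain complexes $C$, $C'$ over $\mathbb{F}$ with filtration compatible ordered bases $\mathfrak{C}=(c_1,\dots,c_n)$, $\mathfrak{C}'=(c'_1,\dots,c'_n)$ and filtration boundary matrices $D$, $D'$. Let $\varphi_\bullet\colon C_\bullet\to C'_\bullet$ be an injective morphism of filtrations of chain complexes with $\varphi=\varphi_N\colon C\to C'$ an isomorphism, $F$ its matrix with respect to $\mathfrak{C},\mathfrak{C}'$, and $D^{\varphi}=DF^{-1}=F^{-1}D'$. Let $V^{\varphi}$ be an invertible upper-triangular matrix such that $R^{\varphi}=D^{\varphi}V^{\varphi}$ is reduced; interpret columns of $R^{\varphi}$ as coordinate vectors with respect to $\mathfrak{C}$ and columns of $V^\varphi$ and of $FR^{\varphi}$ as coordinate vectors (elements of $C'$) with respect to $\mathfrak{C}'$. Then the family $\operatorname{cols}FR^{\varphi}$ of nonzero columns of $FR^{\varphi}$ is a filtration compatible basis for the filtration $B_*(C'_\bullet)$, $t\mapsto\partial(C'_t)$, and for all $j$ with $r^{\varphi}_j\neq 0$, \[ \operatorname{supp}_{B_*(C'_\bullet)}(Fr^{\varphi}_j)=\operatorname{supp}_{C'_\bullet}(v^{\varphi}_j). \]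
   Context: A chain complex is a finite-dimensional graded vector space with differential $\partial$ of degree $-1$, $\partial^2=0$; a filtration of chain complexes is a chain of subcomplexes $C_0\subseteq\dots\subseteq C_N=C$. Support: $\operatorname{supp}_{M_\bullet}(m)=\{t\mid m\in M_t\}$. A basis $\mathfrak{M}$ of $M_N$ is filtration compatible if $\mathfrak{M}\cap M_t$ is a basis of $M_t$ for all $t$; an ordered such basis is a filtration compatible ordered basis if $m\le m'$ implies $\operatorname{supp}(m')\subseteq\operatorname{supp}(m)$. The filtration boundary matrix is the matrix of $\partial$ in that basis. For a matrix $X$, $x_j$ is its $j$-th column, $\operatorname{cols}X$ the family of its nonzero columns; $\operatorname{piv}x_j$ is the largest row index of a nonzero entry of a nonzero column; $X$ is reduced if no two nonzero columns have the same pivot. *)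

theory Defs
  imports "Jordan_Normal_Form.Matrix"
begin

text \<open>Coordinate model: a chain complex C with ordered basis (c_1,...,c_n) is identified
  with 'a^n (type 'a vec of dimension n) via the basis, so c_i is unit_vec n (i-1)
  (indices are 0-based here), and the differential is multiplication by the boundary
  matrix D.\<close>

definition lin_comb :: "nat \<Rightarrow> ('i \<Rightarrow> 'a::field vec) \<Rightarrow> 'i set \<Rightarrow> ('i \<Rightarrow> 'a) \<Rightarrow> 'a vec" where
  "lin_comb n v J c = finsum_vec TYPE('a) n (\<lambda>j. c j \<cdot>\<^sub>v v j) J"

definition family_basis :: "nat \<Rightarrow> 'a::field vec set \<Rightarrow> ('i \<Rightarrow> 'a vec) \<Rightarrow> 'i set \<Rightarrow> bool" where
  "family_basis n W v J \<longleftrightarrow> finite J \<and> (\<forall>j\<in>J. v j \<in> W)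
     \<and> (\<forall>c. lin_comb n v J c = 0\<^sub>v n \<longrightarrow> (\<forall>j\<in>J. c j = 0))
     \<and> (\<forall>w\<in>W. \<exists>c. w = lin_comb n v J c)"

definition is_subspace :: "nat \<Rightarrow> 'a::field vec set \<Rightarrow> bool" where
  "is_subspace n W \<longleftrightarrow> W \<subseteq> carrier_vec n \<and> 0\<^sub>v n \<in> W
     \<and> (\<forall>x\<in>W. \<forall>y\<in>W. x + y \<in> W) \<and> (\<forall>a. \<forall>x\<in>W. a \<cdot>\<^sub>v x \<in> W)"

definition chain_complex_mat :: "nat \<Rightarrow> 'a::field mat \<Rightarrow> bool" where
  "chain_complex_mat n D \<longleftrightarrow> D \<in> carrier_mat n n \<and> D * D = 0\<^sub>m n n"

definition filtration_cc :: "nat \<Rightarrow> nat \<Rightarrow> 'a::field mat \<Rightarrow> (nat \<Rightarrow> 'a vec set) \<Rightarrow> bool" where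
  "filtration_cc n N D Cf \<longleftrightarrow> chain_complex_mat n D
     \<and> (\<forall>t\<le>N. is_subspace n (Cf t) \<and> (\<forall>x\<in>Cf t. D *\<^sub>v x \<in> Cf t))
     \<and> (\<forall>t<N. Cf t \<subseteq> Cf (Suc t))
     \<and> Cf N = carrier_vec n"

definition supp :: "nat \<Rightarrow> (nat \<Rightarrow> 'a vec set) \<Rightarrow> 'a vec \<Rightarrow> nat set" where
  "supp N Mf m = {t. t \<le> N \<and> m \<in> Mf t}"

definition filt_compatible_basis :: "nat \<Rightarrow> nat \<Rightarrow> (nat \<Rightarrow> 'a::field vec set) \<Rightarrow> ('i \<Rightarrow> 'a vec) \<Rightarrow> 'i set \<Rightarrow> bool" where
  "filt_compatible_basis n N Mf v J \<longleftrightarrow>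
     (\<forall>t\<le>N. family_basis n (Mf t) v {j\<in>J. v j \<in> Mf t})"

definition filt_compatible_ordered_std_basis :: "nat \<Rightarrow> nat \<Rightarrow> (nat \<Rightarrow> 'a::field vec set) \<Rightarrow> bool" where
  "filt_compatible_ordered_std_basis n N Mf \<longleftrightarrow>
     filt_compatible_basis n N Mf (unit_vec n) {..<n}
     \<and> (\<forall>i i'. i \<le> i' \<and> i' < n \<longrightarrow> supp N Mf (unit_vec n i') \<subseteq> supp N Mf (unit_vec n i))"

definition piv :: "'a::zero vec \<Rightarrow> nat" where
  "piv x = (GREATEST i. i < dim_vec x \<and> x $ i \<noteq> 0)"

definition reduced :: "'a::zero mat \<Rightarrow> bool" where
  "reduced R \<longleftrightarrow> (\<forall>j<dim_col R. \<forall>j'<dim_col R. j \<noteq> j' \<and> col R j \<noteq> 0\<^sub>v (dim_row R)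
      \<and> col R j' \<noteq> 0\<^sub>v (dim_row R) \<longrightarrow> piv (col R j) \<noteq> piv (col R j'))"

end

(* Because F D = D' F, the matrix F R = F D Finv V equals D' V, so the columns in question are the
   images under D' of the columns of V.  The nonzero ones are linearly independent: R is reduced,
   so its nonzero columns have distinct pivots, and F is injective.  Each C'_t is the coordinate
   subspace spanned by an initial segment of the basis, which the invertible upper triangular V
   maps onto itself.  Hence D'(C'_t) = D' V (C'_t) is spanned by the nonzero columns of D' V whose
   index lies in that segment, i.e. whose column of V lies in C'_t, and by independence these are
   exactly the nonzero columns lying in D'(C'_t). *)

theory Submission
  imports Defs "Jordan_Normal_Form.Determinant"
begin

definition lin_indpt_family :: "nat \<Rightarrow> ('i \<Rightarrow> 'a::field vec) \<Rightarrow> 'i set \<Rightarrow> bool" where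
  "lin_indpt_family n v J \<longleftrightarrow> (\<forall>c. lin_comb n v J c = 0\<^sub>v n \<longrightarrow> (\<forall>j\<in>J. c j = 0))"

definition coord_subspace :: "nat \<Rightarrow> nat set \<Rightarrow> 'a::zero vec set" where
  "coord_subspace n S = {x \<in> carrier_vec n. \<forall>i<n. x $ i \<noteq> 0 \<longrightarrow> i \<in> S}"

lemma lin_comb_carrier:
  assumes "finite J" "v ` J \<subseteq> carrier_vec n"
  shows "lin_comb n v J c \<in> carrier_vec n"
  unfolding lin_comb_def by (rule finsum_vec_closed) (use assms in auto)

lemma index_lin_comb:
  assumes "finite J" "v ` J \<subseteq> carrier_vec n" "i < n"
  shows "lin_comb n v J c $ i = (\<Sum>j\<in>J. c j * v j $ i)"
  unfolding lin_comb_def using assms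
  by (subst index_finsum_vec) (auto intro!: sum.cong)

lemma lin_comb_eqI:
  assumes "finite J" "v ` J \<subseteq> carrier_vec n" "x \<in> carrier_vec n"
    and "\<And>i. i < n \<Longrightarrow> x $ i = (\<Sum>j\<in>J. c j * v j $ i)"
  shows "x = lin_comb n v J c"
  using assms lin_comb_carrier[OF assms(1,2), of c]
  by (intro eq_vecI) (auto simp: index_lin_comb)

lemma lin_comb_cong:
  assumes "finite J" "v ` J \<subseteq> carrier_vec n"
    and "\<And>j. j \<in> J \<Longrightarrow> v j = v' j" "\<And>j. j \<in> J \<Longrightarrow> c j = c' j"
  shows "lin_comb n v J c = lin_comb n v' J c'"
proof -
  have "v' ` J \<subseteq> carrier_vec n" using assms(2,3) by auto
  then show ?thesis
    using assms lin_comb_carrier[OF assms(1,2)] by (intro lin_comb_eqI) (auto simp: index_lin_comb)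
qed

lemma lin_comb_mono_neutral:
  assumes "finite J" "v ` J \<subseteq> carrier_vec n" "K \<subseteq> J"
    and "\<And>j. j \<in> J - K \<Longrightarrow> c j = 0 \<or> v j = 0\<^sub>v n"
  shows "lin_comb n v J c = lin_comb n v K c"
proof (rule lin_comb_eqI)
  fix i assume i: "i < n"
  have "(\<Sum>j\<in>K. c j * v j $ i) = (\<Sum>j\<in>J. c j * v j $ i)"
    using assms i by (intro sum.mono_neutral_left) fastforce+
  then show "lin_comb n v J c $ i = (\<Sum>j\<in>K. c j * v j $ i)"
    using assms i by (simp add: index_lin_comb)
qed (use assms finite_subset[OF assms(3,1)] in \<open>auto intro: lin_comb_carrier\<close>)

lemma lin_comb_delta:
  assumes "finite J" "v ` J \<subseteq> carrier_vec n" "j \<in> J"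
  shows "lin_comb n v J (\<lambda>l. if l = j then 1 else 0) = v j"
proof (rule lin_comb_eqI[symmetric])
  fix i
  have "(\<Sum>l\<in>J. (if l = j then 1 else 0) * v l $ i) = (\<Sum>l\<in>J. if l = j then v l $ i else 0)"
    by (rule sum.cong) auto
  then show "v j $ i = (\<Sum>l\<in>J. (if l = j then 1 else 0) * v l $ i)"
    using assms by simp
qed (use assms in auto)

lemma lin_comb_in_subspace:
  assumes W: "is_subspace n W" and "finite J" and "v ` J \<subseteq> W"
  shows "lin_comb n v J c \<in> W"
  using assms(2,3)
proof (induction J rule: finite_induct)
  case empty
  then show ?case using W unfolding lin_comb_def is_subspace_def by (simp add: finsum_vec_empty)
next
  case (insert j J)
  have "W \<subseteq> carrier_vec n" using W unfolding is_subspace_def by auto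
  then have "lin_comb n v (insert j J) c = c j \<cdot>\<^sub>v v j + lin_comb n v J c"
    unfolding lin_comb_def using insert by (intro finsum_vec_insert) fastforce+
  then show ?case using W insert unfolding is_subspace_def by auto
qed

lemma mult_mat_vec_lin_comb:
  assumes A: "A \<in> carrier_mat m n" and "finite J" "v ` J \<subseteq> carrier_vec n"
  shows "A *\<^sub>v lin_comb n v J c = lin_comb m (\<lambda>j. A *\<^sub>v v j) J c"
  using assms(2,3)
proof (induction J rule: finite_induct)
  case empty
  then show ?case using A unfolding lin_comb_def by (auto simp: finsum_vec_empty)
next
  case (insert j J)
  have "lin_comb n v (insert j J) c = c j \<cdot>\<^sub>v v j + lin_comb n v J c"
    unfolding lin_comb_def using insert by (intro finsum_vec_insert) auto
  moreover have "lin_comb m (\<lambda>j. A *\<^sub>v v j) (insert j J) c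
      = c j \<cdot>\<^sub>v (A *\<^sub>v v j) + lin_comb m (\<lambda>j. A *\<^sub>v v j) J c"
    unfolding lin_comb_def using insert A by (intro finsum_vec_insert) auto
  moreover have "lin_comb n v J c \<in> carrier_vec n" "c j \<cdot>\<^sub>v v j \<in> carrier_vec n"
    using insert lin_comb_carrier by auto
  ultimately show ?case
    using insert by (simp add: mult_add_distrib_mat_vec[OF A] mult_mat_vec[OF A])
qed

lemma lin_indpt_family_subset:
  assumes indep: "lin_indpt_family n v J" and "finite J" "v ` J \<subseteq> carrier_vec n" "K \<subseteq> J"
  shows "lin_indpt_family n v K"
  unfolding lin_indpt_family_def
proof (intro allI impI ballI)
  fix c j assume c: "lin_comb n v K c = 0\<^sub>v n" and j: "j \<in> K"
  let ?c = "\<lambda>l. if l \<in> K then c l else 0"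
  have "finite K" using finite_subset[OF assms(4,2)] .
  have "lin_comb n v J ?c = lin_comb n v K ?c"
    by (rule lin_comb_mono_neutral) (use assms in auto)
  also have "\<dots> = lin_comb n v K c"
    by (rule lin_comb_cong) (use assms \<open>finite K\<close> in auto)
  finally have "lin_comb n v J ?c = 0\<^sub>v n" using c by simp
  then have "?c j = 0" using indep j assms(4) unfolding lin_indpt_family_def by blast
  then show "c j = 0" using j by simp
qed

lemma lin_indpt_family_mult_mat_vecD:
  assumes A: "A \<in> carrier_mat m n" and J: "finite J" "v ` J \<subseteq> carrier_vec n"
    and u: "\<And>j. j \<in> J \<Longrightarrow> u j = A *\<^sub>v v j" and indep: "lin_indpt_family m u J"
  shows "lin_indpt_family n v J"
  unfolding lin_indpt_family_def
proof (intro allI impI)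
  fix c assume "lin_comb n v J c = 0\<^sub>v n"
  then have "A *\<^sub>v lin_comb n v J c = 0\<^sub>v m" using A by auto
  moreover have "lin_comb m (\<lambda>j. A *\<^sub>v v j) J c = lin_comb m u J c"
    by (rule lin_comb_cong) (use J A u in auto)
  ultimately have "lin_comb m u J c = 0\<^sub>v m" using mult_mat_vec_lin_comb[OF A J] by simp
  then show "\<forall>j\<in>J. c j = 0" using indep unfolding lin_indpt_family_def by simp
qed

lemma family_basis_range_lin_comb:
  assumes "lin_indpt_family n v J" "finite J" "v ` J \<subseteq> carrier_vec n"
  shows "family_basis n (range (lin_comb n v J)) v J"
  using assms lin_comb_delta[of J v n, symmetric]
  unfolding family_basis_def lin_indpt_family_def by blast

lemma lin_indpt_family_mem_range_lin_comb_iff: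
  assumes indep: "lin_indpt_family n v J" and J: "finite J" "v ` J \<subseteq> carrier_vec n"
    and K: "K \<subseteq> J" and j: "j \<in> J"
  shows "v j \<in> range (lin_comb n v K) \<longleftrightarrow> j \<in> K"
proof
  have finK: "finite K" using finite_subset[OF K J(1)] .
  show "v j \<in> range (lin_comb n v K)" if "j \<in> K"
    using lin_comb_delta[OF finK _ that] J K by (metis image_mono order_trans rangeI)
  assume "v j \<in> range (lin_comb n v K)"
  then obtain c where c: "v j = lin_comb n v K c" by auto
  show "j \<in> K"
  proof (rule ccontr)
    assume jK: "j \<notin> K"
    define d where "d l = (if l = j then -1 else if l \<in> K then c l else 0)" for l
    have "lin_comb n v J d = 0\<^sub>v n"
    proof (rule lin_comb_eqI[symmetric])
      fix i assume i: "i < n"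
      have "(\<Sum>l\<in>J. d l * v l $ i) = (\<Sum>l\<in>insert j K. d l * v l $ i)"
        using J K j by (intro sum.mono_neutral_right) (auto simp: d_def)
      also have "\<dots> = - v j $ i + (\<Sum>l\<in>K. d l * v l $ i)"
        using finK jK by (simp add: d_def)
      also have "(\<Sum>l\<in>K. d l * v l $ i) = (\<Sum>l\<in>K. c l * v l $ i)"
        using jK by (intro sum.cong) (auto simp: d_def)
      also have "\<dots> = v j $ i"
        using c i finK J K by (simp add: index_lin_comb subset_trans[OF image_mono])
      finally show "0\<^sub>v n $ i = (\<Sum>l\<in>J. d l * v l $ i)" using i by simp
    qed (use J in auto)
    then have "d j = 0" using indep j unfolding lin_indpt_family_def by blast
    then show False by (simp add: d_def)
  qed
qed

lemma piv_spec:
  fixes x :: "'a::zero vec"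
  assumes "x \<noteq> 0\<^sub>v (dim_vec x)"
  shows "piv x < dim_vec x" "x $ piv x \<noteq> 0" "\<And>i. i < dim_vec x \<Longrightarrow> x $ i \<noteq> 0 \<Longrightarrow> i \<le> piv x"
proof -
  obtain k where k: "k < dim_vec x" "x $ k \<noteq> 0" using assms by (metis eq_vecI index_zero_vec)
  have "piv x < dim_vec x \<and> x $ piv x \<noteq> 0" unfolding piv_def
    by (rule GreatestI_nat[of _ k "dim_vec x"]) (use k in auto)
  then show "piv x < dim_vec x" "x $ piv x \<noteq> 0" by auto
  show "\<And>i. i < dim_vec x \<Longrightarrow> x $ i \<noteq> 0 \<Longrightarrow> i \<le> piv x" unfolding piv_def
    by (rule Greatest_le_nat[of _ _ "dim_vec x"]) auto
qed

lemma reduced_lin_indpt_nonzero_cols: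
  assumes R: "R \<in> carrier_mat m k" and red: "reduced R"
  shows "lin_indpt_family m (col R) {j. j < k \<and> col R j \<noteq> 0\<^sub>v m}" (is "lin_indpt_family m _ ?J")
  unfolding lin_indpt_family_def
proof (intro allI impI, rule ccontr)
  fix c assume lc: "lin_comb m (col R) ?J c = 0\<^sub>v m" and "\<not> (\<forall>j\<in>?J. c j = 0)"
  define K where "K = {j\<in>?J. c j \<noteq> 0}"
  have K: "K \<noteq> {}" "finite K" using \<open>\<not> (\<forall>j\<in>?J. c j = 0)\<close> unfolding K_def by auto
  \<comment> \<open>In row p, the largest pivot of a column with nonzero coefficient, only that column contributes.\<close>
  define p where "p = Max ((\<lambda>j. piv (col R j)) ` K)"
  have "p \<in> (\<lambda>j. piv (col R j)) ` K" unfolding p_def using K by (intro Max_in) auto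
  then obtain j0 where j0: "j0 \<in> K" "piv (col R j0) = p" by blast
  have dim: "dim_vec (col R j) = m" for j using R by auto
  have j0_nonzero: "col R j0 \<noteq> 0\<^sub>v (dim_vec (col R j0))" using j0 dim unfolding K_def by auto
  have p: "p < m" "col R j0 $ p \<noteq> 0" using piv_spec[OF j0_nonzero] j0 dim by auto
  have others: "c j * col R j $ p = 0" if "j \<in> ?J - {j0}" for j
  proof (cases "j \<in> K")
    case True
    have "piv (col R j) \<le> p"
      using K True unfolding p_def by (intro Max_ge) auto
    moreover have "piv (col R j) \<noteq> p"
      using red that j0 R unfolding reduced_def K_def by auto
    ultimately have "\<not> p \<le> piv (col R j)" by simp
    then have "col R j $ p = 0" using piv_spec(3)[of "col R j" p] that p dim by auto
    then show ?thesis by simp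
  qed (use that K_def in auto)
  have "(\<Sum>j\<in>?J. c j * col R j $ p) = c j0 * col R j0 $ p + (\<Sum>j\<in>?J - {j0}. c j * col R j $ p)"
    using j0 unfolding K_def by (intro sum.remove) auto
  also have "(\<Sum>j\<in>?J - {j0}. c j * col R j $ p) = 0" using others by (intro sum.neutral) blast
  finally have "(\<Sum>j\<in>?J. c j * col R j $ p) = c j0 * col R j0 $ p" by simp
  moreover have "(\<Sum>j\<in>?J. c j * col R j $ p) = 0"
    using index_lin_comb[of ?J "col R" m p c] lc p carrier_vecI[OF dim] by auto
  ultimately show False using p j0 unfolding K_def by simp
qed

lemma reduced_mult_lin_indpt_nonzero_cols:
  assumes R: "R \<in> carrier_mat n k" and red: "reduced R"
    and F: "F \<in> carrier_mat m n" and G: "G \<in> carrier_mat n m" and GF: "G * F = 1\<^sub>m n"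
  shows "{j. j < k \<and> col (F * R) j \<noteq> 0\<^sub>v m} = {j. j < k \<and> col R j \<noteq> 0\<^sub>v n}"
    and "lin_indpt_family m (col (F * R)) {j. j < k \<and> col R j \<noteq> 0\<^sub>v n}"
proof -
  have "G * (F * R) = R" using assoc_mult_mat[OF G F R] GF left_mult_one_mat[OF R] by simp
  then have cols: "col (F * R) j = F *\<^sub>v col R j" "col R j = G *\<^sub>v col (F * R) j" if "j < k" for j
    using col_mult2[OF F R that] col_mult2[OF G mult_carrier_mat[OF F R] that] by simp_all
  have "F *\<^sub>v 0\<^sub>v n = 0\<^sub>v m" "G *\<^sub>v 0\<^sub>v m = 0\<^sub>v n" using F G by auto
  then have "col (F * R) j = 0\<^sub>v m \<longleftrightarrow> col R j = 0\<^sub>v n" if "j < k" for j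
    using cols[OF that] by metis
  then show "{j. j < k \<and> col (F * R) j \<noteq> 0\<^sub>v m} = {j. j < k \<and> col R j \<noteq> 0\<^sub>v n}" by blast
  show "lin_indpt_family m (col (F * R)) {j. j < k \<and> col R j \<noteq> 0\<^sub>v n}"
    by (rule lin_indpt_family_mult_mat_vecD[OF G _ _ _ reduced_lin_indpt_nonzero_cols[OF R red]])
      (use cols(2) F R in auto)
qed

lemma mult_mat_vec_eq_lin_comb_cols:
  assumes A: "A \<in> carrier_mat m n" and S: "S \<subseteq> {..<n}" and x: "x \<in> coord_subspace n S"
  shows "A *\<^sub>v x = lin_comb m (col A) S (\<lambda>j. x $ j)"
proof (rule lin_comb_eqI)
  have xc: "x \<in> carrier_vec n" using x by (simp add: coord_subspace_def)
  then show "A *\<^sub>v x \<in> carrier_vec m" using A by simp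
  show "finite S" using finite_subset[OF S] by simp
  show "col A ` S \<subseteq> carrier_vec m" using A by auto
  fix i assume i: "i < m"
  have "(A *\<^sub>v x) $ i = (\<Sum>l\<in>{0..<n}. A $$ (i, l) * x $ l)"
    using A i xc by (simp add: scalar_prod_def)
  also have "\<dots> = (\<Sum>l\<in>S. x $ l * col A l $ i)"
  proof (rule sum.mono_neutral_cong_right)
    show "\<forall>l\<in>{0..<n} - S. A $$ (i, l) * x $ l = 0" using x by (auto simp: coord_subspace_def)
    show "A $$ (i, l) * x $ l = x $ l * col A l $ i" if "l \<in> S" for l
      using A S i that by auto
  qed (use S in auto)
  finally show "(A *\<^sub>v x) $ i = (\<Sum>l\<in>S. x $ l * col A l $ i)" .
qed

lemma mult_mat_vec_image_coord_subspace:
  assumes A: "A \<in> carrier_mat m n" and S: "S \<subseteq> {..<n}"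
  shows "(\<lambda>x. A *\<^sub>v x) ` coord_subspace n S = range (lin_comb m (col A) S)"
proof (intro equalityI subsetI)
  fix y assume "y \<in> (\<lambda>x. A *\<^sub>v x) ` coord_subspace n S"
  then show "y \<in> range (lin_comb m (col A) S)" using mult_mat_vec_eq_lin_comb_cols[OF A S] by auto
next
  fix y assume "y \<in> range (lin_comb m (col A) S)"
  then obtain c where c: "y = lin_comb m (col A) S c" by auto
  define x where "x = vec n (\<lambda>j. if j \<in> S then c j else 0)"
  have x: "x \<in> coord_subspace n S" by (auto simp: x_def coord_subspace_def)
  have "A *\<^sub>v x = lin_comb m (col A) S (\<lambda>j. x $ j)" by (rule mult_mat_vec_eq_lin_comb_cols[OF A S x])
  also have "\<dots> = y" unfolding c using A S finite_subset[OF S] by (intro lin_comb_cong) (auto simp: x_def)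
  finally show "y \<in> (\<lambda>x. A *\<^sub>v x) ` coord_subspace n S" using x by blast
qed

lemma coord_subspace_eq_range_lin_comb:
  assumes S: "S \<subseteq> {..<n}"
  shows "coord_subspace n S = range (lin_comb n (unit_vec n) S :: _ \<Rightarrow> 'a::field vec)"
proof -
  have "coord_subspace n S = (\<lambda>x. 1\<^sub>m n *\<^sub>v x) ` (coord_subspace n S :: 'a vec set)"
    by (force simp: coord_subspace_def)
  also have "\<dots> = range (lin_comb n (col (1\<^sub>m n)) S)"
    by (rule mult_mat_vec_image_coord_subspace[OF _ S]) simp
  also have "\<dots> = range (lin_comb n (unit_vec n) S)"
    using S finite_subset[OF S] by (intro arg_cong[where f = range] ext lin_comb_cong) auto
  finally show ?thesis .
qed

lemma family_basis_unit_vec_eq_coord_subspace: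
  assumes W: "is_subspace n W" and basis: "family_basis n W (unit_vec n) S" and S: "S \<subseteq> {..<n}"
  shows "W = coord_subspace n S"
  unfolding coord_subspace_eq_range_lin_comb[OF S]
proof
  show "W \<subseteq> range (lin_comb n (unit_vec n) S)"
    using basis unfolding family_basis_def by blast
  have "finite S" "unit_vec n ` S \<subseteq> W" using basis unfolding family_basis_def by auto
  then show "range (lin_comb n (unit_vec n) S) \<subseteq> W"
    using lin_comb_in_subspace[OF W] by blast
qed

lemma obtain_inverse_mat:
  fixes V :: "'a::semiring_1 mat"
  assumes "V \<in> carrier_mat n n" "invertible_mat V"
  obtains W where "W \<in> carrier_mat n n" "V * W = 1\<^sub>m n" "W * V = 1\<^sub>m n"
proof -
  obtain W where "inverts_mat V W" "inverts_mat W V" using assms unfolding invertible_mat_def by auto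
  then have VW: "V * W = 1\<^sub>m n" and WV: "W * V = 1\<^sub>m (dim_row W)"
    using assms unfolding inverts_mat_def by auto
  have "dim_col W = n" using arg_cong[OF VW, of dim_col] by simp
  moreover have "dim_row W = n" using arg_cong[OF WV, of dim_col] assms(1) by simp
  ultimately show ?thesis using that VW WV by auto
qed

lemma upper_triangular_diag_nonzero:
  fixes V :: "'a::field mat"
  assumes V: "V \<in> carrier_mat n n" "invertible_mat V" "upper_triangular V" and j: "j < n"
  shows "V $$ (j, j) \<noteq> 0"
proof -
  obtain W where W: "W \<in> carrier_mat n n" "V * W = 1\<^sub>m n" using obtain_inverse_mat V by metis
  have "det V * det W = 1" using det_mult[OF V(1) W(1)] W by simp
  then have "0 \<notin> set (diag_mat V)" using upper_triangular_imp_det_eq_0_iff[OF V(1,3)] by auto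
  then show ?thesis using j V(1) unfolding diag_mat_def by auto
qed

lemma upper_triangular_mult_mat_vec_coord_subspace:
  assumes V: "V \<in> carrier_mat n n" "upper_triangular V"
    and down: "\<forall>i'\<in>S. \<forall>i\<le>i'. i \<in> S" and x: "x \<in> coord_subspace n S"
  shows "V *\<^sub>v x \<in> coord_subspace n S"
  unfolding coord_subspace_def
proof (intro CollectI conjI allI impI)
  have xc: "x \<in> carrier_vec n" using x by (simp add: coord_subspace_def)
  then show "V *\<^sub>v x \<in> carrier_vec n" using V by simp
  fix i assume i: "i < n" and "(V *\<^sub>v x) $ i \<noteq> 0"
  then have "(\<Sum>l\<in>{0..<n}. V $$ (i, l) * x $ l) \<noteq> 0"
    using V xc by (simp add: scalar_prod_def)
  then obtain l where "l \<in> {0..<n}" "V $$ (i, l) * x $ l \<noteq> 0"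
    by (rule sum.not_neutral_contains_not_neutral)
  then have l: "l < n" "V $$ (i, l) \<noteq> 0" "x $ l \<noteq> 0" by auto
  have "i \<le> l"
  proof (rule ccontr)
    assume "\<not> i \<le> l"
    then have "V $$ (i, l) = 0" using upper_triangularD[OF V(2)] V(1) i by simp
    then show False using l by simp
  qed
  moreover have "l \<in> S" using x l by (auto simp: coord_subspace_def)
  ultimately show "i \<in> S" using down by blast
qed

lemma upper_triangular_mult_mat_vec_coord_subspaceD:
  fixes V :: "'a::field mat"
  assumes V: "V \<in> carrier_mat n n" "upper_triangular V" "\<And>i. i < n \<Longrightarrow> V $$ (i, i) \<noteq> 0"
    and down: "\<forall>i'\<in>S. \<forall>i\<le>i'. i \<in> S"
    and x: "x \<in> carrier_vec n" and Vx: "V *\<^sub>v x \<in> coord_subspace n S"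
  shows "x \<in> coord_subspace n S"
proof -
  \<comment> \<open>Downward induction: once the entries of x beyond i vanish, entry i of V x is V_ii x_i.\<close>
  have "x $ i = 0" if "i < n" "i \<notin> S" for i
    using that
  proof (induction "n - i" arbitrary: i rule: less_induct)
    case less
    have above: "x $ l = 0" if "i < l" "l < n" for l
    proof -
      have "l \<notin> S" using down less.prems(2) that by auto
      then show ?thesis using less.hyps[of l] that by auto
    qed
    have "(V *\<^sub>v x) $ i = (\<Sum>l\<in>{0..<n}. V $$ (i, l) * x $ l)"
      using V x less.prems by (simp add: scalar_prod_def)
    also have "\<dots> = (\<Sum>l\<in>{i}. V $$ (i, l) * x $ l)"
    proof (rule sum.mono_neutral_right)
      show "\<forall>l\<in>{0..<n} - {i}. V $$ (i, l) * x $ l = 0"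
      proof
        fix l assume l: "l \<in> {0..<n} - {i}"
        show "V $$ (i, l) * x $ l = 0"
        proof (cases "l < i")
          case True
          then show ?thesis using upper_triangularD[OF V(2)] V(1) less.prems(1) by simp
        next
          case False
          then show ?thesis using above l by simp
        qed
      qed
    qed (use less.prems in auto)
    finally have "V $$ (i, i) * x $ i = (V *\<^sub>v x) $ i" by simp
    also have "\<dots> = 0" using Vx less.prems by (auto simp: coord_subspace_def)
    finally show "x $ i = 0" using V(3)[OF less.prems(1)] by simp
  qed
  then show ?thesis using x by (auto simp: coord_subspace_def)
qed

lemma upper_triangular_image_coord_subspace:
  fixes V :: "'a::field mat"
  assumes V: "V \<in> carrier_mat n n" "invertible_mat V" "upper_triangular V"
    and down: "\<forall>i'\<in>S. \<forall>i\<le>i'. i \<in> S"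
  shows "(\<lambda>x. V *\<^sub>v x) ` coord_subspace n S = coord_subspace n S"
proof (intro equalityI subsetI)
  fix y assume "y \<in> (\<lambda>x. V *\<^sub>v x) ` coord_subspace n S"
  then show "y \<in> coord_subspace n S"
    using upper_triangular_mult_mat_vec_coord_subspace[OF V(1,3) down] by blast
next
  fix y :: "'a vec" assume y: "y \<in> coord_subspace n S"
  obtain W where W: "W \<in> carrier_mat n n" "V * W = 1\<^sub>m n" using obtain_inverse_mat[OF V(1,2)] by metis
  have yc: "y \<in> carrier_vec n" using y by (simp add: coord_subspace_def)
  have VWy: "V *\<^sub>v (W *\<^sub>v y) = y" using V(1) W yc by (simp flip: assoc_mult_mat_vec)
  have "W *\<^sub>v y \<in> carrier_vec n" using W(1) yc by simp
  then have "W *\<^sub>v y \<in> coord_subspace n S"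
    using upper_triangular_mult_mat_vec_coord_subspaceD[OF V(1,3) upper_triangular_diag_nonzero[OF V] down]
      y VWy by simp
  then show "y \<in> (\<lambda>x. V *\<^sub>v x) ` coord_subspace n S" using VWy by (metis imageI)
qed

lemma upper_triangular_col_mem_coord_subspace_iff:
  fixes V :: "'a::field mat"
  assumes V: "V \<in> carrier_mat n n" "invertible_mat V" "upper_triangular V"
    and down: "\<forall>i'\<in>S. \<forall>i\<le>i'. i \<in> S" and j: "j < n"
  shows "col V j \<in> coord_subspace n S \<longleftrightarrow> j \<in> S"
proof
  assume "col V j \<in> coord_subspace n S"
  then show "j \<in> S" using upper_triangular_diag_nonzero[OF V j] V(1) j by (auto simp: coord_subspace_def)
next
  assume "j \<in> S"
  have "i \<in> S" if "i < n" "V $$ (i, j) \<noteq> 0" for i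
  proof -
    have "i \<le> j"
    proof (rule ccontr)
      assume "\<not> i \<le> j"
      then have "V $$ (i, j) = 0" using upper_triangularD[OF V(3)] V(1) that(1) by simp
      then show False using that(2) by simp
    qed
    then show "i \<in> S" using down \<open>j \<in> S\<close> by blast
  qed
  then show "col V j \<in> coord_subspace n S" using V(1) j by (auto simp: coord_subspace_def)
qed

lemma image_coord_subspace_family_basis_cols:
  fixes A V :: "'a::field mat"
  assumes A: "A \<in> carrier_mat m n" and V: "V \<in> carrier_mat n n" "invertible_mat V" "upper_triangular V"
    and S: "S \<subseteq> {..<n}" "\<forall>i'\<in>S. \<forall>i\<le>i'. i \<in> S"
    and J: "J = {j. j < n \<and> col (A * V) j \<noteq> 0\<^sub>v m}" and indep: "lin_indpt_family m (col (A * V)) J"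
  defines "B \<equiv> (\<lambda>x. A *\<^sub>v x) ` coord_subspace n S"
  shows "family_basis m B (col (A * V)) {j \<in> J. col (A * V) j \<in> B}"
    and "\<And>j. j \<in> J \<Longrightarrow> col (A * V) j \<in> B \<longleftrightarrow> col V j \<in> coord_subspace n S"
proof -
  let ?w = "col (A * V)"
  have AV: "A * V \<in> carrier_mat m n" using A V by simp
  have finJ: "finite J" and wJ: "?w ` J \<subseteq> carrier_vec m" using J AV by auto
  have "B = (\<lambda>x. A *\<^sub>v x) ` (\<lambda>x. V *\<^sub>v x) ` coord_subspace n S"
    unfolding B_def upper_triangular_image_coord_subspace[OF V S(2)] ..
  also have "\<dots> = (\<lambda>x. (A * V) *\<^sub>v x) ` coord_subspace n S"
    unfolding image_image using A V by (intro image_cong) (auto simp: coord_subspace_def)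
  also have "\<dots> = range (lin_comb m ?w S)" by (rule mult_mat_vec_image_coord_subspace[OF AV S(1)])
  also have "\<dots> = range (lin_comb m ?w (J \<inter> S))"
    using S(1) finite_subset[OF S(1)] AV J by (intro arg_cong[where f = range] ext lin_comb_mono_neutral) auto
  finally have B: "B = range (lin_comb m ?w (J \<inter> S))" .
  have mem: "?w j \<in> B \<longleftrightarrow> j \<in> S" if "j \<in> J" for j
    unfolding B using lin_indpt_family_mem_range_lin_comb_iff[OF indep finJ wJ _ that, of "J \<inter> S"] that by blast
  then have "{j \<in> J. ?w j \<in> B} = J \<inter> S" by blast
  then show "family_basis m B ?w {j \<in> J. ?w j \<in> B}"
    unfolding B using finJ wJ
    by (auto intro!: family_basis_range_lin_comb lin_indpt_family_subset[OF indep finJ wJ])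
  show "?w j \<in> B \<longleftrightarrow> col V j \<in> coord_subspace n S" if "j \<in> J" for j
    using mem[OF that] upper_triangular_col_mem_coord_subspace_iff[OF V S(2)] that J by simp
qed

lemma filt_compatible_ordered_std_basis_level:
  assumes filt: "filtration_cc n N D Cf" and basis: "filt_compatible_ordered_std_basis n N Cf"
    and t: "t \<le> N"
  defines "S \<equiv> {i. i < n \<and> unit_vec n i \<in> Cf t}"
  shows "Cf t = coord_subspace n S" and "\<forall>i'\<in>S. \<forall>i\<le>i'. i \<in> S"
proof -
  have "family_basis n (Cf t) (unit_vec n) S"
    using basis t unfolding filt_compatible_ordered_std_basis_def filt_compatible_basis_def S_def
    by (auto simp: Collect_conj_eq lessThan_def)
  moreover have "is_subspace n (Cf t)" using filt t unfolding filtration_cc_def by auto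
  ultimately show "Cf t = coord_subspace n S"
    using family_basis_unit_vec_eq_coord_subspace unfolding S_def by blast
  show "\<forall>i'\<in>S. \<forall>i\<le>i'. i \<in> S"
  proof (intro ballI allI impI)
    fix i' i assume "i' \<in> S" "i \<le> i'"
    then have "t \<in> supp N Cf (unit_vec n i')" "supp N Cf (unit_vec n i') \<subseteq> supp N Cf (unit_vec n i)"
      using basis t unfolding filt_compatible_ordered_std_basis_def supp_def S_def by auto
    then show "i \<in> S" using \<open>i' \<in> S\<close> \<open>i \<le> i'\<close> unfolding supp_def S_def by auto
  qed
qed

lemma filt_compatible_basis_boundary_cols:
  fixes D V :: "'a::field mat"
  assumes filt: "filtration_cc n N D Cf" and basis: "filt_compatible_ordered_std_basis n N Cf"
    and V: "V \<in> carrier_mat n n" "invertible_mat V" "upper_triangular V"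
    and J: "J = {j. j < n \<and> col (D * V) j \<noteq> 0\<^sub>v n}" and indep: "lin_indpt_family n (col (D * V)) J"
  shows "filt_compatible_basis n N (\<lambda>t. (\<lambda>x. D *\<^sub>v x) ` Cf t) (col (D * V)) J"
    and "\<And>j. j \<in> J \<Longrightarrow> supp N (\<lambda>t. (\<lambda>x. D *\<^sub>v x) ` Cf t) (col (D * V) j) = supp N Cf (col V j)"
proof -
  have D: "D \<in> carrier_mat n n" using filt unfolding filtration_cc_def chain_complex_mat_def by simp
  have level: "family_basis n ((\<lambda>x. D *\<^sub>v x) ` Cf t) (col (D * V)) {j \<in> J. col (D * V) j \<in> (\<lambda>x. D *\<^sub>v x) ` Cf t}
      \<and> (\<forall>j\<in>J. col (D * V) j \<in> (\<lambda>x. D *\<^sub>v x) ` Cf t \<longleftrightarrow> col V j \<in> Cf t)" if "t \<le> N" for t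
  proof -
    define S where "S = {i. i < n \<and> unit_vec n i \<in> Cf t}"
    have "S \<subseteq> {..<n}" by (auto simp: S_def)
    moreover have Cf: "Cf t = coord_subspace n S" and "\<forall>i'\<in>S. \<forall>i\<le>i'. i \<in> S"
      using filt_compatible_ordered_std_basis_level[OF filt basis that] unfolding S_def by blast+
    ultimately show ?thesis
      unfolding Cf using image_coord_subspace_family_basis_cols[OF D V _ _ J indep, of S] by blast
  qed
  show "filt_compatible_basis n N (\<lambda>t. (\<lambda>x. D *\<^sub>v x) ` Cf t) (col (D * V)) J"
    unfolding filt_compatible_basis_def using level by blast
  show "supp N (\<lambda>t. (\<lambda>x. D *\<^sub>v x) ` Cf t) (col (D * V) j) = supp N Cf (col V j)" if "j \<in> J" for j
    unfolding supp_def using level that by auto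
qed

theorem lemma3p7:
  fixes n N :: nat
    and D D' F Finv V :: "'a::field mat"
    and Cf Cf' :: "nat \<Rightarrow> 'a vec set"
  assumes filtC: "filtration_cc n N D Cf"
    and filtC': "filtration_cc n N D' Cf'"
    and basC: "filt_compatible_ordered_std_basis n N Cf"
    and basC': "filt_compatible_ordered_std_basis n N Cf'"
    and F_carrier: "F \<in> carrier_mat n n"
    and F_chain: "F * D = D' * F"
    and F_filt: "\<forall>t\<le>N. \<forall>x\<in>Cf t. F *\<^sub>v x \<in> Cf' t"
    and F_inj: "\<forall>t\<le>N. inj_on (\<lambda>x. F *\<^sub>v x) (Cf t)"
    and F_iso: "invertible_mat F"
    and Finv: "Finv \<in> carrier_mat n n" "F * Finv = 1\<^sub>m n" "Finv * F = 1\<^sub>m n"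
    and V: "V \<in> carrier_mat n n" "invertible_mat V" "upper_triangular V"
    and red: "reduced ((D * Finv) * V)"
  shows "filt_compatible_basis n N (\<lambda>t. (\<lambda>x. D' *\<^sub>v x) ` Cf' t)
           (\<lambda>j. col (F * ((D * Finv) * V)) j) {j. j < n \<and> col ((D * Finv) * V) j \<noteq> 0\<^sub>v n}
      \<and> (\<forall>j<n. col ((D * Finv) * V) j \<noteq> 0\<^sub>v n \<longrightarrow>
           supp N (\<lambda>t. (\<lambda>x. D' *\<^sub>v x) ` Cf' t) (col (F * ((D * Finv) * V)) j)
             = supp N Cf' (col V j))"
proof -
  have Dc: "D \<in> carrier_mat n n" and D'c: "D' \<in> carrier_mat n n"
    using filtC filtC' unfolding filtration_cc_def chain_complex_mat_def by auto
  have "F * (D * Finv) = D'"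
    using assoc_mult_mat[OF F_carrier Dc Finv(1)] assoc_mult_mat[OF D'c F_carrier Finv(1)]
      F_chain Finv(2) right_mult_one_mat[OF D'c] by simp
  then have FR: "F * (D * Finv * V) = D' * V"
    using assoc_mult_mat[OF F_carrier mult_carrier_mat[OF Dc Finv(1)] V(1)] by simp
  let ?J = "{j. j < n \<and> col (D * Finv * V) j \<noteq> 0\<^sub>v n}"
  have "D * Finv * V \<in> carrier_mat n n" using Dc Finv(1) V(1) by simp
  from reduced_mult_lin_indpt_nonzero_cols[OF this red F_carrier Finv(1,3)]
  have J: "?J = {j. j < n \<and> col (D' * V) j \<noteq> 0\<^sub>v n}" and indep: "lin_indpt_family n (col (D' * V)) ?J"
    unfolding FR by auto
  show ?thesis
    unfolding FR using filt_compatible_basis_boundary_cols[OF filtC' basC' V J indep] by blast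
qed

end
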